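(* Let $H$ be a graph whose complement $\overline{H}$ is a co-bipartite circular arc graph. Then $H^*$ is a comparability graph.
   Context: A circular arc graph is the intersection graph of a finite family of arcs of a circle; a graph is co-bipartite if its vertex set can be partitioned into two cliques. For a graph $H$, the graph $H^*$ has vertex set $E(H)$, and two edges $wx$ and $yz$ of $H$ are adjacent in $H^*$ iff $\{w,x,y,z\}$ induces a $2K_2$ (two disjoint edges and no other edges) in $H$; equivalently $H^*$ is the complement of the square of the line graph of $H$. A comparability graph is a graph whose edges can be transitively oriented, i.e. it is the comparability graph of some partial order on its vertex set. *)

theory Defs
  imports Complex_Main
begin

definition simple_graph :: "'a set \<Rightarrow> 'a set set \<Rightarrow> bool" where
  "simple_graph V E \<longleftrightarrow> finite V \<and> (\<forall>e\<in>E. e \<subseteq> V \<and> card e = 2)"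

definition complement_edges :: "'a set \<Rightarrow> 'a set set \<Rightarrow> 'a set set" where
  "complement_edges V E = {{u, v} | u v. u \<in> V \<and> v \<in> V \<and> u \<noteq> v \<and> {u, v} \<notin> E}"

definition is_clique :: "'a set set \<Rightarrow> 'a set \<Rightarrow> bool" where
  "is_clique E C \<longleftrightarrow> (\<forall>u\<in>C. \<forall>v\<in>C. u \<noteq> v \<longrightarrow> {u, v} \<in> E)"

definition co_bipartite :: "'a set \<Rightarrow> 'a set set \<Rightarrow> bool" where
  "co_bipartite V E \<longleftrightarrow>
     (\<exists>A B. A \<union> B = V \<and> A \<inter> B = {} \<and> is_clique E A \<and> is_clique E B)"

definition circle_arc :: "real \<Rightarrow> real \<Rightarrow> complex set" where
  "circle_arc a l = (\<lambda>t. cis t) ` {a .. a + l}"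

definition is_arc :: "complex set \<Rightarrow> bool" where
  "is_arc S \<longleftrightarrow> (\<exists>a l. 0 \<le> l \<and> l \<le> 2 * pi \<and> S = circle_arc a l)"

definition circular_arc_graph :: "'a set \<Rightarrow> 'a set set \<Rightarrow> bool" where
  "circular_arc_graph V E \<longleftrightarrow>
     (\<exists>f :: 'a \<Rightarrow> complex set. (\<forall>v\<in>V. is_arc (f v)) \<and>
        (\<forall>u\<in>V. \<forall>v\<in>V. u \<noteq> v \<longrightarrow> ({u, v} \<in> E \<longleftrightarrow> f u \<inter> f v \<noteq> {})))"

text \<open>Edges of H^*: vertex set is E(H); two edges are adjacent iff they induce a 2K2.\<close>
definition star_edges :: "'a set set \<Rightarrow> 'a set set set" where
  "star_edges E = {{e, f} | e f. e \<in> E \<and> f \<in> E \<and> e \<inter> f = {} \<and>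
                      (\<forall>u\<in>e. \<forall>v\<in>f. {u, v} \<notin> E)}"

definition comparability_graph :: "'a set \<Rightarrow> 'a set set \<Rightarrow> bool" where
  "comparability_graph V E \<longleftrightarrow>
     (\<exists>P. P \<subseteq> V \<times> V \<and> irrefl P \<and> trans P \<and>
        (\<forall>u\<in>V. \<forall>v\<in>V. u \<noteq> v \<longrightarrow> ({u, v} \<in> E \<longleftrightarrow> (u, v) \<in> P \<or> (v, u) \<in> P)))"

end

theory Submission
  imports Defs "HOL-Library.Real_Mod"
begin

text \<open>The two cliques A, B of the complement are independent in H, so every edge of H joins
A to B, and two edges ab, a'b' are adjacent in H* exactly when the arcs of a and b' meet and
the arcs of a' and b meet. Cut the circle at a point of the gap between the disjoint arcs of the
ends of one edge a0 b0, so that each arc is given by a start in [0, 2\<pi>) and a length.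
Adjacent edges of H* have A-arcs with different end points, and orienting every edge of H*
towards the edge whose A-arc ends later is transitive: since all A-arcs meet the arc of a0 and
all B-arcs meet that of b0, both facts become linear arithmetic on the coordinates.\<close>

text \<open>An arc of the circle of circumference T is coded by its start x \<in> [0, T) and its length
l \<in> [0, T], standing for the image of [x, x + l]; two such arcs meet either directly or after one
of them wraps around past T.\<close>

definition arcs_meet :: "real \<Rightarrow> real \<Rightarrow> real \<Rightarrow> real \<Rightarrow> real \<Rightarrow> bool" where
  "arcs_meet T x1 l1 x2 l2 \<longleftrightarrow>
     (x1 \<le> x2 \<and> x2 \<le> x1 + l1) \<or> x2 + T \<le> x1 + l1 \<or> (x2 \<le> x1 \<and> x1 \<le> x2 + l2) \<or> x1 + T \<le> x2 + l2"

definition valid_arc :: "real \<Rightarrow> real \<Rightarrow> real \<Rightarrow> bool" where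
  "valid_arc T x l \<longleftrightarrow> 0 \<le> x \<and> x < T \<and> 0 \<le> l \<and> l \<le> T"

lemma cis_add_multiple_2pi: "cis (t + of_int n * (2*pi)) = cis t"
  using cis_mult[of t "2*pi*of_int n"] cis_multiple_2pi[of "of_int n"] by (simp add: mult.commute)

lemma cis_image_shift_2pi:
  "cis ` {a + of_int n * (2*pi) .. b + of_int n * (2*pi)} = cis ` {a..b}"
proof -
  have "cis ` {a + of_int n * (2*pi) .. b + of_int n * (2*pi)} = (\<lambda>t. cis (t + of_int n * (2*pi))) ` {a..b}"
    by (simp flip: image_add_atLeastAtMost' add: image_image)
  also have "\<dots> = cis ` {a..b}"
    by (simp add: cis_add_multiple_2pi)
  finally show ?thesis .
qed

lemma circle_arc_rebase:
  "circle_arc a l = cis ` {p + (a - p) rmod (2*pi) .. p + (a - p) rmod (2*pi) + l}"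
proof -
  obtain n where n: "a - p = (a - p) rmod (2*pi) + of_int n * (2*pi)"
    using rcong_altdef rcong_rmod_left[OF rcong_refl] by blast
  show ?thesis
    unfolding circle_arc_def
    using cis_image_shift_2pi[of "p + (a - p) rmod (2*pi)" n "p + (a - p) rmod (2*pi) + l"] n
    by (simp add: algebra_simps)
qed

lemma cis_arcs_intersect_iff:
  assumes "valid_arc (2*pi) x1 l1" "valid_arc (2*pi) x2 l2"
  shows "cis ` {p+x1..p+x1+l1} \<inter> cis ` {p+x2..p+x2+l2} \<noteq> {} \<longleftrightarrow> arcs_meet (2*pi) x1 l1 x2 l2"
proof
  assume "cis ` {p+x1..p+x1+l1} \<inter> cis ` {p+x2..p+x2+l2} \<noteq> {}"
  then obtain t1 t2 where t: "t1 \<in> {p+x1..p+x1+l1}" "t2 \<in> {p+x2..p+x2+l2}" "cis t1 = cis t2"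
    by blast
  then obtain n where n: "t2 = t1 + of_int n * (2*pi)"
    by (auto simp: cis_eq_iff rcong_altdef)
  have "t2 - t1 < 2 * (2*pi)" "-2 * (2*pi) < t2 - t1"
    using t assms unfolding valid_arc_def by auto
  moreover have "t2 - t1 = of_int n * (2*pi)"
    using n by simp
  ultimately have "of_int n * (2*pi) < 2 * (2*pi)" "-2 * (2*pi) < of_int n * (2*pi)"
    by linarith+
  then have "of_int n < (2::real)" "-2 < (of_int n :: real)"
    by (simp_all only: mult_less_cancel_right_pos pi_gt_zero mult_pos_pos zero_less_numeral)
  then have "n = -1 \<or> n = 0 \<or> n = 1"
    by linarith
  then show "arcs_meet (2*pi) x1 l1 x2 l2"
    using t n assms unfolding arcs_meet_def valid_arc_def by auto
next
  have wrap: "cis (t + 2*pi) = cis t" for t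
    using cis_add_multiple_2pi[of t 1] by simp
  let ?I1 = "cis ` {p+x1..p+x1+l1}" and ?I2 = "cis ` {p+x2..p+x2+l2}"
  assume "arcs_meet (2*pi) x1 l1 x2 l2"
  then consider "p+x2 \<in> {p+x1..p+x1+l1}" | "p+x2+2*pi \<in> {p+x1..p+x1+l1}"
    | "p+x1 \<in> {p+x2..p+x2+l2}" | "p+x1+2*pi \<in> {p+x2..p+x2+l2}"
    using assms unfolding arcs_meet_def valid_arc_def by fastforce
  then have "cis (p+x2) \<in> ?I1 \<inter> ?I2 \<or> cis (p+x1) \<in> ?I1 \<inter> ?I2"
  proof cases
    case 2
    then have "cis (p+x2) \<in> ?I1"
      using wrap by (metis image_eqI)
    then show ?thesis
      using assms unfolding valid_arc_def by auto
  next
    case 4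
    then have "cis (p+x1) \<in> ?I2"
      using wrap by (metis image_eqI)
    then show ?thesis
      using assms unfolding valid_arc_def by auto
  qed (use assms in \<open>auto simp: valid_arc_def\<close>)
  then show "?I1 \<inter> ?I2 \<noteq> {}"
    by blast
qed

lemma disjoint_arcs_gap:
  assumes "0 \<le> l1" "0 \<le> l2" "\<not> arcs_meet (2*pi) 0 l1 ((a2 - a1) rmod (2*pi)) l2"
  obtains p where "0 < (a1 - p) rmod (2*pi)"
    "(a1 - p) rmod (2*pi) + l1 < (a2 - p) rmod (2*pi)" "(a2 - p) rmod (2*pi) + l2 < 2*pi"
proof -
  define x where "x = (a2 - a1) rmod (2*pi)"
  obtain n where n: "a2 - a1 = x + of_int n * (2*pi)"
    using rcong_altdef rcong_rmod_left[OF rcong_refl] unfolding x_def by blast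
  have x: "0 \<le> x" "x < 2*pi"
    unfolding x_def by (simp_all add: rmod_nonneg rmod_less)
  with assms have gap: "l1 < x" "x + l2 < 2*pi"
    unfolding arcs_meet_def x_def[symmetric] by auto
  \<comment> \<open>cut the circle in the middle of the gap between the end of the second arc and the start of the first\<close>
  define d where "d = (x + l2 + 2*pi) / 2"
  have "(a1 - (a1 + d)) rmod (2*pi) = 2*pi - d"
    using gap x assms(2) pi_gt_zero by (intro rmod_unique[where n = "-1"]) (auto simp: d_def)
  moreover have "(a2 - (a1 + d)) rmod (2*pi) = x - d + 2*pi"
    using gap x n assms(2) by (intro rmod_unique[where n = "n - 1"]) (auto simp: d_def algebra_simps)
  ultimately show ?thesis
    using that[of "a1 + d"] gap x assms by (simp add: d_def field_simps)
qed

lemma circular_arc_coordinates: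
  fixes f :: "'a \<Rightarrow> complex set"
  assumes arcs: "\<forall>v\<in>V. is_arc (f v)" and "a0 \<in> V" "b0 \<in> V" "f a0 \<inter> f b0 = {}"
  obtains x l where "\<forall>v\<in>V. valid_arc (2*pi) (x v) (l v)"
    "\<forall>u\<in>V. \<forall>v\<in>V. f u \<inter> f v \<noteq> {} \<longleftrightarrow> arcs_meet (2*pi) (x u) (l u) (x v) (l v)"
    "0 < x a0" "x a0 + l a0 < x b0" "x b0 + l b0 < 2*pi"
proof -
  obtain s l where sl: "\<forall>v\<in>V. 0 \<le> l v \<and> l v \<le> 2*pi \<and> f v = circle_arc (s v) (l v)"
    using arcs unfolding is_arc_def by metis
  have valid: "valid_arc (2*pi) ((s v - p) rmod (2*pi)) (l v)" if "v \<in> V" for v p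
    using sl that by (simp add: valid_arc_def rmod_nonneg rmod_less)
  have meet: "f u \<inter> f v \<noteq> {} \<longleftrightarrow>
      arcs_meet (2*pi) ((s u - p) rmod (2*pi)) (l u) ((s v - p) rmod (2*pi)) (l v)"
    if "u \<in> V" "v \<in> V" for u v p
    using sl that cis_arcs_intersect_iff[OF valid valid]
    by (simp add: circle_arc_rebase[of _ _ p] add.assoc)
  have "\<not> arcs_meet (2*pi) 0 (l a0) ((s b0 - s a0) rmod (2*pi)) (l b0)"
    using meet[of a0 b0 "s a0"] assms by simp
  then obtain p where "0 < (s a0 - p) rmod (2*pi)"
    "(s a0 - p) rmod (2*pi) + l a0 < (s b0 - p) rmod (2*pi)" "(s b0 - p) rmod (2*pi) + l b0 < 2*pi"
    using disjoint_arcs_gap sl assms by metis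
  then show ?thesis
    using that[of "\<lambda>v. (s v - p) rmod (2*pi)" l] meet valid by blast
qed

definition arc_end :: "real \<Rightarrow> real \<Rightarrow> real \<Rightarrow> real" where
  "arc_end T x l = (if x + l < T then x + l else x + l - T)"

lemma arc_end_neq_if_crossing:
  assumes "valid_arc T xa la" "valid_arc T xb lb" "valid_arc T xa' la'" "valid_arc T xb' lb'"
    and "\<not> arcs_meet T xa la xb lb" "\<not> arcs_meet T xa' la' xb' lb'"
    and "arcs_meet T xa la xb' lb'" "arcs_meet T xa' la' xb lb"
  shows "arc_end T xa la \<noteq> arc_end T xa' la'"
  using assms unfolding arcs_meet_def arc_end_def valid_arc_def by (smt (verit))

text \<open>Here x0, l0 and y0, m0 are the arcs of a0 and b0; the circle is cut in the gap between them,
so both lie strictly inside (0, T).\<close>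

lemma arcs_meet_if_arc_end_less:
  assumes "valid_arc T x0 l0" "valid_arc T y0 m0" "valid_arc T x1 l1" "valid_arc T y1 m1"
    "valid_arc T x2 l2" "valid_arc T y2 m2" "valid_arc T x3 l3" "valid_arc T y3 m3"
    and "arcs_meet T x0 l0 x1 l1" "arcs_meet T x0 l0 x2 l2" "arcs_meet T x0 l0 x3 l3"
    and "arcs_meet T y0 m0 y1 m1" "arcs_meet T y0 m0 y2 m2" "arcs_meet T y0 m0 y3 m3"
    and "\<not> arcs_meet T x1 l1 y1 m1" "\<not> arcs_meet T x2 l2 y2 m2" "\<not> arcs_meet T x3 l3 y3 m3"
    and "arcs_meet T x1 l1 y2 m2" "arcs_meet T x2 l2 y1 m1"
    "arcs_meet T x2 l2 y3 m3" "arcs_meet T x3 l3 y2 m2"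
    and "0 < x0" "x0 + l0 < y0" "y0 + m0 < T"
    and "arc_end T x1 l1 < arc_end T x2 l2" "arc_end T x2 l2 < arc_end T x3 l3"
  shows "arcs_meet T x1 l1 y3 m3 \<and> arcs_meet T x3 l3 y1 m1"
  using assms unfolding arcs_meet_def arc_end_def valid_arc_def by (smt (verit))

lemma comparability_graph_by_key:
  fixes key :: "'b \<Rightarrow> 'c::linorder"
  assumes key_neq: "\<And>u v. u \<in> X \<Longrightarrow> v \<in> X \<Longrightarrow> u \<noteq> v \<Longrightarrow> {u, v} \<in> F \<Longrightarrow> key u \<noteq> key v"
    and key_trans: "\<And>u v w. u \<in> X \<Longrightarrow> v \<in> X \<Longrightarrow> w \<in> X \<Longrightarrow> {u, v} \<in> F \<Longrightarrow> {v, w} \<in> F \<Longrightarrow>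
      key u < key v \<Longrightarrow> key v < key w \<Longrightarrow> {u, w} \<in> F"
  shows "comparability_graph X F"
  unfolding comparability_graph_def
proof (intro exI conjI)
  define P where "P = {(u, v). u \<in> X \<and> v \<in> X \<and> {u, v} \<in> F \<and> key u < key v}"
  show "P \<subseteq> X \<times> X" "irrefl P"
    unfolding P_def irrefl_def by auto
  show "trans P"
  proof (rule transI)
    fix u v w assume "(u, v) \<in> P" "(v, w) \<in> P"
    then show "(u, w) \<in> P"
      using key_trans[of u v w] unfolding P_def by auto
  qed
  show "\<forall>u\<in>X. \<forall>v\<in>X. u \<noteq> v \<longrightarrow> ({u, v} \<in> F \<longleftrightarrow> (u, v) \<in> P \<or> (v, u) \<in> P)"
  proof (intro ballI impI)
    fix u v assume "u \<in> X" "v \<in> X" "u \<noteq> v"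
    moreover have "{v, u} = {u, v}"
      by (rule insert_commute)
    ultimately show "{u, v} \<in> F \<longleftrightarrow> (u, v) \<in> P \<or> (v, u) \<in> P"
      using key_neq[of u v] unfolding P_def by auto
  qed
qed

lemma doubleton_in_star_edges_iff:
  "{e, e'} \<in> star_edges E \<longleftrightarrow>
     e \<in> E \<and> e' \<in> E \<and> e \<inter> e' = {} \<and> (\<forall>u\<in>e. \<forall>v\<in>e'. {u, v} \<notin> E)"
proof
  assume "{e, e'} \<in> star_edges E"
  then obtain f f' where "{e, e'} = {f, f'}" and ff': "f \<in> E" "f' \<in> E" "f \<inter> f' = {}"
      "\<forall>u\<in>f. \<forall>v\<in>f'. {u, v} \<notin> E"
    unfolding star_edges_def mem_Collect_eq by (elim exE conjE) iprover
  then consider "e = f" "e' = f'" | "e = f'" "e' = f"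
    by (auto simp: doubleton_eq_iff)
  then show "e \<in> E \<and> e' \<in> E \<and> e \<inter> e' = {} \<and> (\<forall>u\<in>e. \<forall>v\<in>e'. {u, v} \<notin> E)"
  proof cases
    case 1
    then show ?thesis
      using ff' by simp
  next
    case 2
    have "{u, v} \<notin> E" if "u \<in> f'" "v \<in> f" for u v
      using ff'(4) that insert_commute[of u v "{}"] by simp
    then show ?thesis
      using ff' 2 by (simp add: Int_commute)
  qed
next
  assume "e \<in> E \<and> e' \<in> E \<and> e \<inter> e' = {} \<and> (\<forall>u\<in>e. \<forall>v\<in>e'. {u, v} \<notin> E)"
  then show "{e, e'} \<in> star_edges E"
    unfolding star_edges_def by blast
qed

lemma star_edge_cross_iff:
  assumes "A \<inter> B = {}" and cross: "\<forall>e\<in>E. \<exists>a\<in>A. \<exists>b\<in>B. e = {a, b}"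
    and "a \<in> A" "b \<in> B" "a' \<in> A" "b' \<in> B" "{a, b} \<in> E" "{a', b'} \<in> E"
  shows "{{a, b}, {a', b'}} \<in> star_edges E \<longleftrightarrow> {a, b'} \<notin> E \<and> {a', b} \<notin> E"
proof -
  have no_edge_inside: "{u, v} \<notin> E" if "{u, v} \<subseteq> A \<or> {u, v} \<subseteq> B" for u v
  proof
    assume "{u, v} \<in> E"
    then obtain a b where "a \<in> A" "b \<in> B" "{u, v} = {a, b}"
      using cross by blast
    then show False
      using that \<open>A \<inter> B = {}\<close> by blast
  qed
  show ?thesis
  proof
    assume "{{a, b}, {a', b'}} \<in> star_edges E"
    then have "\<forall>u\<in>{a, b}. \<forall>v\<in>{a', b'}. {u, v} \<notin> E"
      unfolding doubleton_in_star_edges_iff by blast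
    then show "{a, b'} \<notin> E \<and> {a', b} \<notin> E"
      by (simp add: insert_commute)
  next
    assume non: "{a, b'} \<notin> E \<and> {a', b} \<notin> E"
    then have "a \<noteq> a'" "b \<noteq> b'"
      using assms(7,8) by auto
    then have "{a, b} \<inter> {a', b'} = {}"
      using assms(1,3-6) by auto
    moreover have "{a, a'} \<notin> E" "{b, b'} \<notin> E"
      using no_edge_inside assms(3-6) by simp_all
    ultimately show "{{a, b}, {a', b'}} \<in> star_edges E"
      unfolding doubleton_in_star_edges_iff using non assms(7,8) by (simp add: insert_commute)
  qed
qed

lemma comparability_star_of_arc_model:
  fixes x l :: "'a \<Rightarrow> real"
  assumes AB: "A \<inter> B = {}" and cross: "\<forall>e\<in>E. \<exists>a\<in>A. \<exists>b\<in>B. e = {a, b}"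
    and valid: "\<forall>v\<in>A \<union> B. valid_arc T (x v) (l v)"
    and meet_A: "\<forall>u\<in>A. \<forall>v\<in>A. arcs_meet T (x u) (l u) (x v) (l v)"
    and meet_B: "\<forall>u\<in>B. \<forall>v\<in>B. arcs_meet T (x u) (l u) (x v) (l v)"
    and edge: "\<forall>a\<in>A. \<forall>b\<in>B. {a, b} \<in> E \<longleftrightarrow> \<not> arcs_meet T (x a) (l a) (x b) (l b)"
    and "a0 \<in> A" "b0 \<in> B" "0 < x a0" "x a0 + l a0 < x b0" "x b0 + l b0 < T"
  shows "comparability_graph E (star_edges E)"
proof -
  define key where "key e = arc_end T (x (the_elem (e \<inter> A))) (l (the_elem (e \<inter> A)))" for e
  have key: "key {a, b} = arc_end T (x a) (l a)" if "a \<in> A" "b \<in> B" for a b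
  proof -
    have "{a, b} \<inter> A = {a}"
      using that AB by auto
    then show ?thesis
      unfolding key_def by simp
  qed
  have star: "{{a, b}, {a', b'}} \<in> star_edges E \<longleftrightarrow>
      arcs_meet T (x a) (l a) (x b') (l b') \<and> arcs_meet T (x a') (l a') (x b) (l b)"
    if "a \<in> A" "b \<in> B" "a' \<in> A" "b' \<in> B" "{a, b} \<in> E" "{a', b'} \<in> E" for a b a' b'
    using star_edge_cross_iff[OF AB cross that] edge that by auto
  show ?thesis
  proof (rule comparability_graph_by_key[where key = key])
    fix e e' assume "e \<in> E" "e' \<in> E" "{e, e'} \<in> star_edges E"
    moreover obtain a b a' b' where "a \<in> A" "b \<in> B" "e = {a, b}" "a' \<in> A" "b' \<in> B" "e' = {a', b'}"
      using cross \<open>e \<in> E\<close> \<open>e' \<in> E\<close> by metis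
    ultimately show "key e \<noteq> key e'"
      using arc_end_neq_if_crossing valid edge star key by (metis UnI1 UnI2)
  next
    fix e1 e2 e3
    assume "e1 \<in> E" "e2 \<in> E" "e3 \<in> E" "{e1, e2} \<in> star_edges E" "{e2, e3} \<in> star_edges E"
      "key e1 < key e2" "key e2 < key e3"
    moreover obtain a1 b1 a2 b2 a3 b3 where "a1 \<in> A" "b1 \<in> B" "e1 = {a1, b1}"
      "a2 \<in> A" "b2 \<in> B" "e2 = {a2, b2}" "a3 \<in> A" "b3 \<in> B" "e3 = {a3, b3}"
      using cross \<open>e1 \<in> E\<close> \<open>e2 \<in> E\<close> \<open>e3 \<in> E\<close> by metis
    ultimately show "{e1, e3} \<in> star_edges E"
      using arcs_meet_if_arc_end_less[of T "x a0" "l a0" "x b0" "l b0" "x a1" "l a1" "x b1" "l b1"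
          "x a2" "l a2" "x b2" "l b2" "x a3" "l a3" "x b3" "l b3"]
        valid meet_A meet_B edge star key \<open>a0 \<in> A\<close> \<open>b0 \<in> B\<close> assms(9-11)
      by simp
  qed
qed

lemma complement_edges_iff:
  assumes "u \<in> V" "v \<in> V" "u \<noteq> v"
  shows "{u, v} \<in> complement_edges V E \<longleftrightarrow> {u, v} \<notin> E"
  using assms unfolding complement_edges_def by auto

lemma edges_cross_complement_cliques:
  assumes "simple_graph V E" "A \<union> B = V"
    and "is_clique (complement_edges V E) A" "is_clique (complement_edges V E) B"
  shows "\<forall>e\<in>E. \<exists>a\<in>A. \<exists>b\<in>B. e = {a, b}"
proof
  fix e assume "e \<in> E"
  with assms(1) have "e \<subseteq> V" "card e = 2"
    unfolding simple_graph_def by auto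
  then obtain u v where uv: "e = {u, v}" "u \<noteq> v" "u \<in> V" "v \<in> V"
    by (auto simp: card_2_iff)
  have "{u, v} \<notin> complement_edges V E"
    using complement_edges_iff[OF uv(3,4,2)] \<open>e \<in> E\<close> uv(1) by blast
  then have "\<not> {u, v} \<subseteq> A" "\<not> {u, v} \<subseteq> B"
    using assms(3,4) uv(2) unfolding is_clique_def by auto
  then show "\<exists>a\<in>A. \<exists>b\<in>B. e = {a, b}"
    using uv assms(2) by (auto simp: insert_commute)
qed

lemma is_arc_nonempty: "is_arc S \<Longrightarrow> S \<noteq> {}"
  unfolding is_arc_def circle_arc_def by auto

lemma clique_arcs_intersect:
  assumes arcs: "\<forall>v\<in>V. is_arc (f v)"
    and model: "\<forall>u\<in>V. \<forall>v\<in>V. u \<noteq> v \<longrightarrow> ({u, v} \<in> C \<longleftrightarrow> f u \<inter> f v \<noteq> {})"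
    and "is_clique C K" "K \<subseteq> V"
  shows "\<forall>u\<in>K. \<forall>v\<in>K. f u \<inter> f v \<noteq> {}"
proof (intro ballI)
  fix u v assume "u \<in> K" "v \<in> K"
  show "f u \<inter> f v \<noteq> {}"
  proof (cases "u = v")
    case True
    then show ?thesis
      using arcs is_arc_nonempty \<open>u \<in> K\<close> \<open>K \<subseteq> V\<close> by auto
  next
    case False
    then show ?thesis
      using model \<open>is_clique C K\<close> \<open>u \<in> K\<close> \<open>v \<in> K\<close> \<open>K \<subseteq> V\<close> unfolding is_clique_def by blast
  qed
qed

lemma circular_arc_complement_coordinates:
  assumes "circular_arc_graph V (complement_edges V E)"
    and V: "A \<union> B = V" "A \<inter> B = {}"
    and cliques: "is_clique (complement_edges V E) A" "is_clique (complement_edges V E) B"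
    and "a0 \<in> A" "b0 \<in> B" "{a0, b0} \<in> E"
  obtains x l :: "'a \<Rightarrow> real" where "\<forall>v\<in>A \<union> B. valid_arc (2*pi) (x v) (l v)"
    "\<forall>u\<in>A. \<forall>v\<in>A. arcs_meet (2*pi) (x u) (l u) (x v) (l v)"
    "\<forall>u\<in>B. \<forall>v\<in>B. arcs_meet (2*pi) (x u) (l u) (x v) (l v)"
    "\<forall>a\<in>A. \<forall>b\<in>B. {a, b} \<in> E \<longleftrightarrow> \<not> arcs_meet (2*pi) (x a) (l a) (x b) (l b)"
    "0 < x a0" "x a0 + l a0 < x b0" "x b0 + l b0 < 2*pi"
proof -
  obtain f :: "'a \<Rightarrow> complex set" where arcs: "\<forall>v\<in>V. is_arc (f v)"
    and model: "\<forall>u\<in>V. \<forall>v\<in>V. u \<noteq> v \<longrightarrow> ({u, v} \<in> complement_edges V E \<longleftrightarrow> f u \<inter> f v \<noteq> {})"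
    using assms(1) unfolding circular_arc_graph_def by blast
  have edge: "{a, b} \<in> E \<longleftrightarrow> f a \<inter> f b = {}" if "a \<in> A" "b \<in> B" for a b
  proof -
    have "a \<in> V" "b \<in> V" "a \<noteq> b"
      using that V by auto
    then show ?thesis
      using model complement_edges_iff[of a V b E] by blast
  qed
  obtain x l where valid: "\<forall>v\<in>V. valid_arc (2*pi) (x v) (l v)"
    and meet: "\<forall>u\<in>V. \<forall>v\<in>V. f u \<inter> f v \<noteq> {} \<longleftrightarrow> arcs_meet (2*pi) (x u) (l u) (x v) (l v)"
    and gap: "0 < x a0" "x a0 + l a0 < x b0" "x b0 + l b0 < 2*pi"
    using circular_arc_coordinates[OF arcs, of a0 b0] edge assms(6-8) V(1) by blast
  have "\<forall>u\<in>A. \<forall>v\<in>A. f u \<inter> f v \<noteq> {}" "\<forall>u\<in>B. \<forall>v\<in>B. f u \<inter> f v \<noteq> {}"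
    using clique_arcs_intersect[OF arcs model] cliques V(1) by blast+
  then show thesis
    using that[of x l] valid meet gap edge V(1) by blast
qed

theorem lemma4:
  fixes V :: "'a set" and E :: "'a set set"
  assumes "simple_graph V E"
    and "co_bipartite V (complement_edges V E)"
    and "circular_arc_graph V (complement_edges V E)"
  shows "comparability_graph E (star_edges E)"
proof (cases "E = {}")
  case True
  then show ?thesis
    by (intro comparability_graph_by_key[where key = "\<lambda>_. 0 :: nat"]) simp_all
next
  case False
  then obtain e0 where "e0 \<in> E"
    by blast
  obtain A B where V: "A \<union> B = V" "A \<inter> B = {}"
    and cliques: "is_clique (complement_edges V E) A" "is_clique (complement_edges V E) B"
    using assms(2) unfolding co_bipartite_def by blast
  have cross: "\<forall>e\<in>E. \<exists>a\<in>A. \<exists>b\<in>B. e = {a, b}"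
    using edges_cross_complement_cliques[OF assms(1) V(1) cliques] .
  then obtain a0 b0 where ab0: "a0 \<in> A" "b0 \<in> B" "{a0, b0} \<in> E"
    using \<open>e0 \<in> E\<close> by metis
  obtain x l where model: "\<forall>v\<in>A \<union> B. valid_arc (2*pi) (x v) (l v)"
    "\<forall>u\<in>A. \<forall>v\<in>A. arcs_meet (2*pi) (x u) (l u) (x v) (l v)"
    "\<forall>u\<in>B. \<forall>v\<in>B. arcs_meet (2*pi) (x u) (l u) (x v) (l v)"
    "\<forall>a\<in>A. \<forall>b\<in>B. {a, b} \<in> E \<longleftrightarrow> \<not> arcs_meet (2*pi) (x a) (l a) (x b) (l b)"
    and gap: "0 < x a0" "x a0 + l a0 < x b0" "x b0 + l b0 < 2*pi"
    by (rule circular_arc_complement_coordinates[OF assms(3) V cliques ab0])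
  show ?thesis
    by (rule comparability_star_of_arc_model[OF V(2) cross model ab0(1,2) gap])
qed

end
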